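(* Let $G\le\mathrm{Aut}(\mathcal{T}_d)$ be a persistent, finite-state self-similar group. If the Röver–Nekrashevych group $V_d(G)$ is finitely generated, then so is $G$.
   Context: Let $X=\{1,\dots,d\}$ ($d\ge2$) with its usual order; $X^*$ is the vertex set of the rooted $d$-ary tree $\mathcal{T}_d$, ordered lexicographically. Every $f\in\mathrm{Aut}(\mathcal{T}_d)$ has a wreath recursion $f=\rho(f)(f_1,\dots,f_d)$ with $\rho(f)\in S_d$, $f_i$ determined by $f(iw)=\rho(f)(i)f_i(w)$; the states of $f$ form the smallest set containing $f$ and closed under $f\mapsto f_i$. $G$ is self-similar if it contains all states of its elements; finite-state if each element has finitely many states; persistent if there is $i$ such that $g_i=g$ for every $g\in G$. With $X^\omega$ the infinite words, for finite complete rooted subtrees $T_-,T_+$ with $n$ leaves $u_1,\dots,u_n$, $v_1,\dots,v_n$ (lexicographic order), $\sigma\in S_n$, $g_i\in G$, $[T_-,\sigma(g_1,\dots,g_n),T_+]$ is the homeomorphism of $X^\omega$ with $v_iw\mapsto u_{\sigma(i)}g_i(w)$; $V_d(G)$ is the group of all these. *)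

theory Defs
  imports "HOL-Algebra.Bij" "HOL-Algebra.Generated_Groups"
begin

text \<open>Alphabet X = {0..<d} (order-isomorphic to {1..d}); finite words are lists over X.\<close>

definition fwords :: "nat \<Rightarrow> nat list set" where
  "fwords d = {u. set u \<subseteq> {..<d}}"

definition iwords :: "nat \<Rightarrow> (nat \<Rightarrow> nat) set" where
  "iwords d = {w. \<forall>k. w k < d}"

definition tree_aut :: "nat \<Rightarrow> (nat list \<Rightarrow> nat list) \<Rightarrow> bool" where
  "tree_aut d f \<longleftrightarrow> f \<in> Bij (fwords d) \<and>
     (\<forall>u\<in>fwords d. length (f u) = length u) \<and>
     (\<forall>u\<in>fwords d. \<forall>v\<in>fwords d. take (length u) (f (u @ v)) = f u)"

text \<open>The state (section) f_i of f at letter i: f(iw) = rho(f)(i) f_i(w).\<close>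
definition section1 :: "nat \<Rightarrow> (nat list \<Rightarrow> nat list) \<Rightarrow> nat \<Rightarrow> (nat list \<Rightarrow> nat list)" where
  "section1 d f i = (\<lambda>w \<in> fwords d. tl (f (i # w)))"

inductive_set states :: "nat \<Rightarrow> (nat list \<Rightarrow> nat list) \<Rightarrow> (nat list \<Rightarrow> nat list) set"
  for d f where
    self: "f \<in> states d f"
  | step: "h \<in> states d f \<Longrightarrow> i < d \<Longrightarrow> section1 d h i \<in> states d f"

definition self_similar :: "nat \<Rightarrow> (nat list \<Rightarrow> nat list) set \<Rightarrow> bool" where
  "self_similar d G \<longleftrightarrow> (\<forall>g\<in>G. states d g \<subseteq> G)"

definition finite_state :: "nat \<Rightarrow> (nat list \<Rightarrow> nat list) set \<Rightarrow> bool" where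
  "finite_state d G \<longleftrightarrow> (\<forall>g\<in>G. finite (states d g))"

definition persistent :: "nat \<Rightarrow> (nat list \<Rightarrow> nat list) set \<Rightarrow> bool" where
  "persistent d G \<longleftrightarrow> (\<exists>i<d. \<forall>g\<in>G. section1 d g i = g)"

definition iact :: "(nat list \<Rightarrow> nat list) \<Rightarrow> (nat \<Rightarrow> nat) \<Rightarrow> (nat \<Rightarrow> nat)" where
  "iact g w = (\<lambda>k. g (map w [0..<Suc k]) ! k)"

definition conc :: "nat list \<Rightarrow> (nat \<Rightarrow> nat) \<Rightarrow> (nat \<Rightarrow> nat)" where
  "conc u w = (\<lambda>k. if k < length u then u ! k else w (k - length u))"

definition complete_subtree :: "nat \<Rightarrow> nat list set \<Rightarrow> bool" where
  "complete_subtree d T \<longleftrightarrow> finite T \<and> T \<subseteq> fwords d \<and> [] \<in> T \<and>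
     (\<forall>u v. u @ v \<in> T \<longrightarrow> u \<in> T) \<and>
     (\<forall>u\<in>T. (\<forall>i<d. u @ [i] \<in> T) \<or> (\<forall>i<d. u @ [i] \<notin> T))"

definition leaves :: "nat \<Rightarrow> nat list set \<Rightarrow> nat list set" where
  "leaves d T = {u \<in> T. \<forall>i<d. u @ [i] \<notin> T}"

definition lexless :: "nat list \<Rightarrow> nat list \<Rightarrow> bool" where
  "lexless u v \<longleftrightarrow> (u, v) \<in> lexord {(x, y). x < y}"

definition leaf_list :: "nat \<Rightarrow> nat list set \<Rightarrow> nat list list" where
  "leaf_list d T = (THE L. set L = leaves d T \<and> sorted_wrt lexless L)"

text \<open>f = [T-, sigma(g_1..g_n), T+] (indices 0-based): v_i w \<mapsto> u_sigma(i) g_i(w).\<close>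
definition is_V_elem :: "nat \<Rightarrow> (nat list \<Rightarrow> nat list) set \<Rightarrow> ((nat \<Rightarrow> nat) \<Rightarrow> (nat \<Rightarrow> nat)) \<Rightarrow> bool" where
  "is_V_elem d G f \<longleftrightarrow>
     (\<exists>Tm Tp \<sigma> gs. complete_subtree d Tm \<and> complete_subtree d Tp \<and>
        length (leaf_list d Tm) = length (leaf_list d Tp) \<and>
        bij_betw \<sigma> {..<length (leaf_list d Tp)} {..<length (leaf_list d Tp)} \<and>
        (\<forall>i<length (leaf_list d Tp). gs i \<in> G) \<and>
        f \<in> extensional (iwords d) \<and>
        (\<forall>i<length (leaf_list d Tp). \<forall>w\<in>iwords d.
            f (conc (leaf_list d Tp ! i) w) = conc (leaf_list d Tm ! \<sigma> i) (iact (gs i) w)))"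

definition Vgroup :: "nat \<Rightarrow> (nat list \<Rightarrow> nat list) set \<Rightarrow> ((nat \<Rightarrow> nat) \<Rightarrow> (nat \<Rightarrow> nat)) set" where
  "Vgroup d G = {f. is_V_elem d G f}"

definition fin_gen :: "'a set \<Rightarrow> ('a \<Rightarrow> 'a) set \<Rightarrow> bool" where
  "fin_gen A H \<longleftrightarrow> (\<exists>S. finite S \<and> S \<subseteq> H \<and> generate (BijGroup A) S = H)"

end

theory Submission
  imports Defs "HOL-Library.List_Lexorder"
begin

text \<open>Every element of \<open>V\<^sub>d(G)\<close> acts near each infinite word as a prefix replacement followed
  by an element of \<open>G\<close>; when \<open>G\<close> is finite-state these elements can be drawn from a finite set of
  states closed under sections. Let \<open>K\<close> be the subgroup generated by the states needed for a finite
  generating set of \<open>V\<^sub>d(G)\<close>. Being closed under sections, \<open>K\<close> makes the bijections of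
  \<open>X\<^sup>\<omega>\<close> acting locally through \<open>K\<close> a group, which therefore contains \<open>V\<^sub>d(G)\<close>. In
  particular \<open>g \<in> G\<close>, acting on all of \<open>X\<^sup>\<omega>\<close>, acts through \<open>K\<close> near \<open>x\<^sup>\<omega>\<close> for the
  persistent letter \<open>x\<close>. But there \<open>g\<close> acts as \<open>x\<^sup>n \<mapsto> g(x\<^sup>n)\<close> followed by \<open>g\<close> itself,
  and an element acting on a cylinder is determined by that action, so \<open>g \<in> K\<close>.\<close>

definition ipref :: "(nat \<Rightarrow> nat) \<Rightarrow> nat \<Rightarrow> nat list" where
  "ipref w n = map w [0..<n]"

definition ishift :: "nat \<Rightarrow> (nat \<Rightarrow> nat) \<Rightarrow> nat \<Rightarrow> nat" where
  "ishift n w = (\<lambda>k. w (k + n))"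

lemma fwords_append [simp]: "u @ v \<in> fwords d \<longleftrightarrow> u \<in> fwords d \<and> v \<in> fwords d"
  by (auto simp: fwords_def)

lemma fwords_Cons [simp]: "i # v \<in> fwords d \<longleftrightarrow> i < d \<and> v \<in> fwords d"
  by (auto simp: fwords_def)

lemma fwords_Nil [simp]: "[] \<in> fwords d"
  by (auto simp: fwords_def)

lemma fwords_drop: "u \<in> fwords d \<Longrightarrow> drop n u \<in> fwords d"
  by (auto simp: fwords_def dest: in_set_dropD)

lemma fwords_take: "u \<in> fwords d \<Longrightarrow> take n u \<in> fwords d"
  by (auto simp: fwords_def dest: in_set_takeD)

lemma fwords_nth: "u \<in> fwords d \<Longrightarrow> k < length u \<Longrightarrow> u ! k < d"
  unfolding fwords_def using nth_mem by blast

lemma replicate_in_fwords: "x < d \<Longrightarrow> replicate n x \<in> fwords d"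
  by (auto simp: fwords_def)

lemma length_ipref [simp]: "length (ipref w n) = n"
  by (simp add: ipref_def)

lemma nth_ipref [simp]: "k < n \<Longrightarrow> ipref w n ! k = w k"
  by (simp add: ipref_def)

lemma ipref_in_fwords: "w \<in> iwords d \<Longrightarrow> ipref w n \<in> fwords d"
  by (auto simp: ipref_def fwords_def iwords_def)

lemma ipref_Suc: "ipref w (Suc n) = ipref w n @ [w n]"
  by (simp add: ipref_def)

lemma ipref_add: "ipref w (n + m) = ipref w n @ ipref (ishift n w) m"
  by (rule nth_equalityI) (auto simp: ipref_def nth_append ishift_def)

lemma ishift_in_iwords: "w \<in> iwords d \<Longrightarrow> ishift n w \<in> iwords d"
  by (auto simp: ishift_def iwords_def)

lemma conc_ipref_ishift: "conc (ipref w n) (ishift n w) = w"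
  by (auto simp: conc_def ipref_def ishift_def)

lemma conc_Nil [simp]: "conc [] z = z"
  by (auto simp: conc_def)

lemma conc_append: "conc (u @ v) z = conc u (conc v z)"
  unfolding conc_def by (rule ext) (auto simp: nth_append)

lemma conc_in_iwords: "u \<in> fwords d \<Longrightarrow> z \<in> iwords d \<Longrightarrow> conc u z \<in> iwords d"
  using fwords_nth by (auto simp: conc_def iwords_def)

lemma ipref_conc_le: "n \<le> length u \<Longrightarrow> ipref (conc u z) n = take n u"
  by (rule nth_equalityI) (auto simp: ipref_def conc_def)

lemma ipref_conc_length: "ipref (conc u z) (length u) = u"
  by (simp add: ipref_conc_le)

lemma ipref_conc_add: "ipref (conc u z) (length u + m) = u @ ipref z m"
  by (rule nth_equalityI) (auto simp: ipref_def nth_append conc_def)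

lemma ishift_conc: "ishift (length u) (conc u z) = z"
  by (auto simp: conc_def ishift_def)

lemma conc_inj: "conc u x = conc u y \<Longrightarrow> x = y"
  by (metis ishift_conc)

section \<open>Tree automorphisms, sections and the action on infinite words\<close>

definition wsection :: "nat \<Rightarrow> (nat list \<Rightarrow> nat list) \<Rightarrow> nat list \<Rightarrow> nat list \<Rightarrow> nat list" where
  "wsection d g u = (\<lambda>v\<in>fwords d. drop (length u) (g (u @ v)))"

lemma tree_aut_in_fwords: "tree_aut d g \<Longrightarrow> u \<in> fwords d \<Longrightarrow> g u \<in> fwords d"
  by (auto simp: tree_aut_def Bij_def bij_betw_def)

lemma tree_aut_length: "tree_aut d g \<Longrightarrow> u \<in> fwords d \<Longrightarrow> length (g u) = length u"
  by (auto simp: tree_aut_def)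

lemma tree_aut_take:
  "tree_aut d g \<Longrightarrow> u \<in> fwords d \<Longrightarrow> v \<in> fwords d \<Longrightarrow> take (length u) (g (u @ v)) = g u"
  by (auto simp: tree_aut_def)

lemma tree_aut_extensional: "tree_aut d g \<Longrightarrow> g \<in> extensional (fwords d)"
  by (auto simp: tree_aut_def Bij_def)

lemma tree_aut_append:
  assumes "tree_aut d g" "u \<in> fwords d" "v \<in> fwords d"
  shows "g (u @ v) = g u @ wsection d g u v"
proof -
  have "g (u @ v) = take (length u) (g (u @ v)) @ drop (length u) (g (u @ v))" by simp
  also have "\<dots> = g u @ wsection d g u v" using tree_aut_take[OF assms] assms by (simp add: wsection_def)
  finally show ?thesis .
qed

lemma tree_aut_nth_prefix:
  assumes "tree_aut d g" "u \<in> fwords d" "k < n" "n \<le> length u"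
  shows "g (take n u) ! k = g u ! k"
proof -
  have "take n (g u) = g (take n u)"
    using tree_aut_take[OF assms(1) fwords_take[OF assms(2)] fwords_drop[OF assms(2)], of n n] assms(4)
    by simp
  then show ?thesis by (metis assms(3) nth_take)
qed

lemma wsection_Nil: "g \<in> extensional (fwords d) \<Longrightarrow> wsection d g [] = g"
  by (auto simp: wsection_def extensional_def)

lemma wsection_snoc:
  "u \<in> fwords d \<Longrightarrow> i < d \<Longrightarrow> wsection d g (u @ [i]) = section1 d (wsection d g u) i"
  by (rule ext) (auto simp: wsection_def section1_def drop_Suc tl_drop)

lemma wsection_in_states:
  "u \<in> fwords d \<Longrightarrow> g \<in> extensional (fwords d) \<Longrightarrow> wsection d g u \<in> states d g"
proof (induction u rule: rev_induct)
  case Nil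
  then show ?case by (simp add: wsection_Nil states.self)
next
  case (snoc i u)
  then show ?case by (simp add: wsection_snoc states.step)
qed

lemma wsection_replicate:
  assumes "g \<in> extensional (fwords d)" "x < d" "section1 d g x = g"
  shows "wsection d g (replicate n x) = g"
proof (induction n)
  case 0
  then show ?case using wsection_Nil[OF assms(1)] by simp
next
  case (Suc n)
  have "wsection d g (replicate (Suc n) x) = section1 d (wsection d g (replicate n x)) x"
    using wsection_snoc[OF replicate_in_fwords[OF assms(2)] assms(2)]
    by (simp add: replicate_append_same[symmetric])
  then show ?case using Suc assms(3) by simp
qed

lemma iact_nth: "iact g w k = g (ipref w (Suc k)) ! k"
  by (simp add: iact_def ipref_def)

lemma iact_in_iwords: "tree_aut d g \<Longrightarrow> w \<in> iwords d \<Longrightarrow> iact g w \<in> iwords d"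
  using tree_aut_in_fwords tree_aut_length ipref_in_fwords
  by (auto simp: iwords_def iact_nth intro!: fwords_nth)

lemma ipref_iact:
  assumes g: "tree_aut d g" and w: "w \<in> iwords d"
  shows "ipref (iact g w) n = g (ipref w n)"
proof (rule nth_equalityI)
  show "length (ipref (iact g w) n) = length (g (ipref w n))"
    using tree_aut_length[OF g ipref_in_fwords[OF w]] by simp
  fix k assume "k < length (ipref (iact g w) n)"
  then have k: "k < n" by simp
  have "take (Suc k) (ipref w n) = ipref w (Suc k)"
    using k by (simp add: ipref_def take_map)
  then have "g (ipref w (Suc k)) ! k = g (ipref w n) ! k"
    using tree_aut_nth_prefix[OF g ipref_in_fwords[OF w], of k "Suc k" n] k by simp
  then show "ipref (iact g w) n ! k = g (ipref w n) ! k"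
    using k by (simp add: iact_nth)
qed

lemma iact_conc:
  assumes g: "tree_aut d g" and v: "v \<in> fwords d" and z: "z \<in> iwords d"
  shows "iact g (conc v z) = conc (g v) (iact (wsection d g v) z)"
proof (rule ext)
  fix k
  show "iact g (conc v z) k = conc (g v) (iact (wsection d g v) z) k"
  proof (cases "k < length v")
    case True
    have "iact g (conc v z) k = g (take (Suc k) v) ! k"
      using True by (simp add: iact_nth ipref_conc_le)
    also have "\<dots> = g v ! k" using tree_aut_nth_prefix[OF g v, of k "Suc k"] True by simp
    also have "\<dots> = conc (g v) (iact (wsection d g v) z) k"
      using True tree_aut_length[OF g v] by (simp add: conc_def)
    finally show ?thesis .
  next
    case False
    define m where "m = k - length v"
    have "ipref (conc v z) (Suc k) = v @ ipref z (Suc m)"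
      using False ipref_conc_add[of v z "Suc m"] by (simp add: m_def Suc_diff_le)
    then have "g (ipref (conc v z) (Suc k)) ! k = wsection d g v (ipref z (Suc m)) ! m"
      using tree_aut_append[OF g v ipref_in_fwords[OF z]] tree_aut_length[OF g v] False
      by (simp add: nth_append m_def)
    then show ?thesis using False tree_aut_length[OF g v] by (simp add: iact_nth conc_def m_def)
  qed
qed

lemma iact_compose:
  assumes "tree_aut d h" "w \<in> iwords d"
  shows "iact (compose (fwords d) g h) w = iact g (iact h w)"
  using ipref_iact[OF assms] ipref_in_fwords[OF assms(2)]
  by (auto simp: iact_nth compose_def)

lemma iact_restrict_id: "w \<in> iwords d \<Longrightarrow> iact (\<lambda>x\<in>fwords d. x) w = w"
  by (rule ext) (simp add: iact_nth ipref_in_fwords)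

lemma iact_determines:
  assumes g: "tree_aut d g" and h: "tree_aut d h" and "d > 0"
    and eq: "\<forall>w\<in>iwords d. iact g w = iact h w"
  shows "g = h"
proof (rule ext)
  fix v
  define z0 where "z0 = (\<lambda>_::nat. 0::nat)"
  have z0: "z0 \<in> iwords d" unfolding z0_def iwords_def using \<open>d > 0\<close> by simp
  show "g v = h v"
  proof (cases "v \<in> fwords d")
    case False
    then show ?thesis
      using tree_aut_extensional[OF g] tree_aut_extensional[OF h] by (simp add: extensional_def)
  next
    case True
    then have "conc v z0 \<in> iwords d" using conc_in_iwords z0 by blast
    then show ?thesis
      using ipref_iact[OF g] ipref_iact[OF h] eq ipref_conc_length by metis
  qed
qed

locale self_similar_group =
  fixes d :: nat and G :: "(nat list \<Rightarrow> nat list) set"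
  assumes two_le_d: "d \<ge> 2"
    and G_subgroup: "subgroup G (BijGroup (fwords d))"
    and G_tree_aut_all: "\<forall>g\<in>G. tree_aut d g"
    and G_self_similar: "self_similar d G"
begin

abbreviation "Sym_fwords \<equiv> BijGroup (fwords d)"

lemma group_Sym_fwords: "group Sym_fwords"
  by (rule group_BijGroup)

lemma G_tree_aut: "g \<in> G \<Longrightarrow> tree_aut d g"
  using G_tree_aut_all by blast

lemma G_extensional: "g \<in> G \<Longrightarrow> g \<in> extensional (fwords d)"
  using G_tree_aut tree_aut_extensional by blast

lemma G_carrier: "g \<in> G \<Longrightarrow> g \<in> carrier Sym_fwords"
  using subgroup.mem_carrier[OF G_subgroup] .

lemma G_inv: "g \<in> G \<Longrightarrow> inv\<^bsub>Sym_fwords\<^esub> g \<in> G"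
  using subgroup.m_inv_closed[OF G_subgroup] .

lemma G_mult_eq_compose: "g \<in> G \<Longrightarrow> h \<in> G \<Longrightarrow> g \<otimes>\<^bsub>Sym_fwords\<^esub> h = compose (fwords d) g h"
  using G_carrier by (simp add: BijGroup_def)

lemma one_Sym_fwords: "\<one>\<^bsub>Sym_fwords\<^esub> = (\<lambda>x\<in>fwords d. x)"
  by (simp add: BijGroup_def)

lemma wsection_in_G: "g \<in> G \<Longrightarrow> u \<in> fwords d \<Longrightarrow> wsection d g u \<in> G"
  using wsection_in_states[OF _ G_extensional] G_self_similar unfolding self_similar_def by blast

lemma section1_in_G: "g \<in> G \<Longrightarrow> i < d \<Longrightarrow> section1 d g i \<in> G"
  using states.step[OF states.self] G_self_similar unfolding self_similar_def by blast

lemma wsection_single: "g \<in> G \<Longrightarrow> i < d \<Longrightarrow> wsection d g [i] = section1 d g i"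
  using wsection_snoc[of "[]" d i g] wsection_Nil[OF G_extensional] by simp

lemma iact_mult:
  "g \<in> G \<Longrightarrow> h \<in> G \<Longrightarrow> w \<in> iwords d \<Longrightarrow> iact (g \<otimes>\<^bsub>Sym_fwords\<^esub> h) w = iact g (iact h w)"
  using iact_compose G_tree_aut G_mult_eq_compose by simp

lemma iact_inv_left:
  assumes "g \<in> G" "w \<in> iwords d"
  shows "iact (inv\<^bsub>Sym_fwords\<^esub> g) (iact g w) = w"
proof -
  have "iact (inv\<^bsub>Sym_fwords\<^esub> g) (iact g w) = iact (inv\<^bsub>Sym_fwords\<^esub> g \<otimes>\<^bsub>Sym_fwords\<^esub> g) w"
    using iact_mult[OF G_inv[OF assms(1)] assms] by simp
  also have "inv\<^bsub>Sym_fwords\<^esub> g \<otimes>\<^bsub>Sym_fwords\<^esub> g = \<one>\<^bsub>Sym_fwords\<^esub>"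
    using group.l_inv[OF group_Sym_fwords G_carrier[OF assms(1)]] .
  finally show ?thesis by (simp only: one_Sym_fwords iact_restrict_id[OF assms(2)])
qed

lemma iact_inv_right:
  assumes "g \<in> G" "w \<in> iwords d"
  shows "iact g (iact (inv\<^bsub>Sym_fwords\<^esub> g) w) = w"
proof -
  have "iact g (iact (inv\<^bsub>Sym_fwords\<^esub> g) w) = iact (g \<otimes>\<^bsub>Sym_fwords\<^esub> inv\<^bsub>Sym_fwords\<^esub> g) w"
    using iact_mult[OF assms(1) G_inv[OF assms(1)] assms(2)] by simp
  also have "g \<otimes>\<^bsub>Sym_fwords\<^esub> inv\<^bsub>Sym_fwords\<^esub> g = \<one>\<^bsub>Sym_fwords\<^esub>"
    using group.r_inv[OF group_Sym_fwords G_carrier[OF assms(1)]] .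
  finally show ?thesis by (simp only: one_Sym_fwords iact_restrict_id[OF assms(2)])
qed

lemma first_letter:
  assumes g: "g \<in> G" and i: "i < d"
  obtains j where "j < d" "g [i] = [j]"
proof -
  have "g [i] \<in> fwords d" "length (g [i]) = 1"
    using tree_aut_in_fwords[OF G_tree_aut[OF g]] tree_aut_length[OF G_tree_aut[OF g]] i by auto
  then show ?thesis using that by (cases "g [i]") auto
qed

lemma section1_mult:
  assumes a: "a \<in> G" and b: "b \<in> G" and i: "i < d" and j: "b [i] = [j]" "j < d"
  shows "section1 d (a \<otimes>\<^bsub>Sym_fwords\<^esub> b) i = section1 d a j \<otimes>\<^bsub>Sym_fwords\<^esub> section1 d b i"
proof (rule ext)
  fix w
  have a': "tree_aut d a" and b': "tree_aut d b" using G_tree_aut a b by blast+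
  show "section1 d (a \<otimes>\<^bsub>Sym_fwords\<^esub> b) i w = (section1 d a j \<otimes>\<^bsub>Sym_fwords\<^esub> section1 d b i) w"
  proof (cases "w \<in> fwords d")
    case False
    then show ?thesis
      using section1_in_G a b i j by (simp add: G_mult_eq_compose section1_def compose_def)
  next
    case True
    have s: "section1 d b i w \<in> fwords d"
      using tree_aut_in_fwords[OF G_tree_aut[OF section1_in_G[OF b i]] True] .
    have "a (b (i # w)) = a [j] @ section1 d a j (section1 d b i w)"
      using tree_aut_append[OF b', of "[i]" w] tree_aut_append[OF a', of "[j]" "section1 d b i w"]
        True s i j wsection_single a b by simp
    moreover have "length (a [j]) = 1" using tree_aut_length[OF a', of "[j]"] j by simp
    ultimately have "tl (a (b (i # w))) = section1 d a j (section1 d b i w)"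
      by (cases "a [j]") auto
    then show ?thesis
      using True i section1_in_G a b j by (simp add: G_mult_eq_compose section1_def compose_def)
  qed
qed

lemma section1_one: "i < d \<Longrightarrow> section1 d \<one>\<^bsub>Sym_fwords\<^esub> i = \<one>\<^bsub>Sym_fwords\<^esub>"
  by (rule ext) (simp add: one_Sym_fwords section1_def)

lemma section1_inv:
  assumes g: "g \<in> G" and i: "i < d"
  obtains j where "j < d" "section1 d (inv\<^bsub>Sym_fwords\<^esub> g) i = inv\<^bsub>Sym_fwords\<^esub> (section1 d g j)"
proof -
  obtain j where j: "j < d" "(inv\<^bsub>Sym_fwords\<^esub> g) [i] = [j]"
    using first_letter[OF G_inv[OF g] i] by blast
  have c1: "section1 d g j \<in> carrier Sym_fwords"
    and c2: "section1 d (inv\<^bsub>Sym_fwords\<^esub> g) i \<in> carrier Sym_fwords"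
    using G_carrier section1_in_G g G_inv i j by blast+
  have "section1 d g j \<otimes>\<^bsub>Sym_fwords\<^esub> section1 d (inv\<^bsub>Sym_fwords\<^esub> g) i = \<one>\<^bsub>Sym_fwords\<^esub>"
    using section1_mult[OF g G_inv[OF g] i j(2) j(1)] group.r_inv[OF group_Sym_fwords G_carrier[OF g]]
      section1_one[OF i] by simp
  then have "inv\<^bsub>Sym_fwords\<^esub> (section1 d g j) = section1 d (inv\<^bsub>Sym_fwords\<^esub> g) i"
    using group.inv_equality[OF group_Sym_fwords group.inv_comm[OF group_Sym_fwords _ c1 c2] c1 c2]
    by blast
  then show ?thesis using that j by metis
qed

lemma generate_subset_G: "F \<subseteq> G \<Longrightarrow> generate Sym_fwords F \<subseteq> G"
  using group.generate_subgroup_incl[OF group_Sym_fwords _ G_subgroup] by blast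

lemma section1_generate:
  assumes F: "F \<subseteq> G" "\<forall>t\<in>F. \<forall>i<d. section1 d t i \<in> F"
  shows "k \<in> generate Sym_fwords F \<Longrightarrow> i < d \<Longrightarrow> section1 d k i \<in> generate Sym_fwords F"
proof (induction k arbitrary: i rule: generate.induct)
  case one
  then show ?case using section1_one generate.one by metis
next
  case (incl h)
  then show ?case using F(2) generate.incl by metis
next
  case (inv h)
  obtain j where "j < d" "section1 d (inv\<^bsub>Sym_fwords\<^esub> h) i = inv\<^bsub>Sym_fwords\<^esub> (section1 d h j)"
    using section1_inv inv F(1) by blast
  then show ?case using F(2) inv generate.inv by metis
next
  case (eng h1 h2)
  have "h1 \<in> G" "h2 \<in> G" using eng generate_subset_G[OF F(1)] by blast+
  moreover obtain j where "j < d" "h2 [i] = [j]" using first_letter \<open>h2 \<in> G\<close> eng(5) by blast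
  ultimately show ?case using section1_mult eng generate.eng by metis
qed

lemma wsection_generate:
  assumes F: "F \<subseteq> G" "\<forall>t\<in>F. \<forall>i<d. section1 d t i \<in> F"
    and k: "k \<in> generate Sym_fwords F"
  shows "u \<in> fwords d \<Longrightarrow> wsection d k u \<in> generate Sym_fwords F"
proof (induction u rule: rev_induct)
  case Nil
  then show ?case using wsection_Nil G_extensional generate_subset_G[OF F(1)] k by (metis subsetD)
next
  case (snoc i u)
  then show ?case using wsection_snoc[of u d i k] section1_generate[OF F] by simp
qed

lemma cylinder_refine:
  assumes h: "h \<in> G" and v: "v \<in> fwords d"
    and f: "\<forall>z\<in>iwords d. f (conc p z) = conc u (iact h z)"
  shows "\<forall>z\<in>iwords d. f (conc (p @ v) z) = conc (u @ h v) (iact (wsection d h v) z)"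
  using f conc_in_iwords[OF v] iact_conc[OF G_tree_aut[OF h] v] by (simp add: conc_append)

text \<open>If \<open>a\<close> were shorter than \<open>u\<close>, the letter of the left side at position \<open>length a\<close> could be
  prescribed freely; \<open>d \<ge> 2\<close> makes it differ from \<open>u ! length a\<close>.\<close>

lemma cylinder_action_unique:
  assumes g: "g \<in> G" and h: "h \<in> G" and a: "a \<in> fwords d" and u: "u \<in> fwords d"
    and eq: "\<forall>z\<in>iwords d. conc a (iact g z) = conc u (iact h z)"
  shows "g = h"
proof -
  have not_shorter: False
    if "g \<in> G" "a \<in> fwords d" "\<forall>z\<in>iwords d. conc a (iact g z) = conc u (iact h z)"
       "length a < length u" for g h a u
  proof -
    define c where "c = (if u ! length a = 0 then 1 else (0::nat))"
    have c: "c < d" "c \<noteq> u ! length a" unfolding c_def using two_le_d by auto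
    define y where "y = (\<lambda>_::nat. c)"
    have y: "y \<in> iwords d" unfolding y_def iwords_def using c by simp
    define z where "z = iact (inv\<^bsub>Sym_fwords\<^esub> g) y"
    have "z \<in> iwords d" unfolding z_def using iact_in_iwords G_tree_aut G_inv that(1) y by blast
    moreover have "conc a (iact g z) (length a) = c"
      unfolding z_def using iact_inv_right[OF that(1) y] by (simp add: conc_def y_def)
    moreover have "conc u (iact h z) (length a) = u ! length a" using that(4) by (simp add: conc_def)
    ultimately show False using that(3) c by metis
  qed
  have "length a = length u"
    using not_shorter[OF g a eq] not_shorter[OF h u] eq by (metis linorder_neqE_nat)
  moreover have "(\<lambda>_::nat. 0::nat) \<in> iwords d" using two_le_d by (simp add: iwords_def)
  ultimately have "a = u" using eq ipref_conc_length by metis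
  then have "\<forall>w\<in>iwords d. iact g w = iact h w" using eq conc_inj by metis
  then show ?thesis using iact_determines[OF G_tree_aut[OF g] G_tree_aut[OF h]] two_le_d by simp
qed

end

section \<open>Bijections of \<open>X\<^sup>\<omega>\<close> acting locally through a group of tree automorphisms\<close>

definition locally_by :: "nat \<Rightarrow> (nat list \<Rightarrow> nat list) set \<Rightarrow> ((nat \<Rightarrow> nat) \<Rightarrow> nat \<Rightarrow> nat) \<Rightarrow> bool"
  where "locally_by d H f \<longleftrightarrow> (\<forall>w\<in>iwords d. \<exists>n u h. h \<in> H \<and> u \<in> fwords d \<and>
      (\<forall>z\<in>iwords d. f (conc (ipref w n) z) = conc u (iact h z)))"

lemma locally_by_mono: "H \<subseteq> H' \<Longrightarrow> locally_by d H f \<Longrightarrow> locally_by d H' f"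
  unfolding locally_by_def by blast

locale state_closed_subgroup = self_similar_group +
  fixes H
  assumes H_subset: "H \<subseteq> G" and H_subgroup: "subgroup H Sym_fwords"
    and H_wsection: "\<forall>h\<in>H. \<forall>u\<in>fwords d. wsection d h u \<in> H"
begin

definition local_bijections :: "((nat \<Rightarrow> nat) \<Rightarrow> nat \<Rightarrow> nat) set" where
  "local_bijections = {f \<in> Bij (iwords d). locally_by d H f}"

lemma locally_by_long_image:
  assumes "locally_by d H f" and w: "w \<in> iwords d"
  obtains n u h where "h \<in> H" "u \<in> fwords d" "m \<le> length u"
    "\<forall>z\<in>iwords d. f (conc (ipref w n) z) = conc u (iact h z)"
proof -
  obtain n u h where h: "h \<in> H" "u \<in> fwords d"
    and e: "\<forall>z\<in>iwords d. f (conc (ipref w n) z) = conc u (iact h z)"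
    using assms unfolding locally_by_def by blast
  define v where "v = ipref (ishift n w) m"
  have v: "v \<in> fwords d" unfolding v_def using ipref_in_fwords ishift_in_iwords w by blast
  have hG: "h \<in> G" using h H_subset by blast
  have "\<forall>z\<in>iwords d. f (conc (ipref w (n + m)) z) = conc (u @ h v) (iact (wsection d h v) z)"
    using cylinder_refine[OF hG v e] unfolding v_def ipref_add .
  moreover have "m \<le> length (u @ h v)" using tree_aut_length[OF G_tree_aut[OF hG] v] by (simp add: v_def)
  moreover have "u @ h v \<in> fwords d" using h tree_aut_in_fwords[OF G_tree_aut[OF hG] v] by simp
  moreover have "wsection d h v \<in> H" using H_wsection h v by blast
  ultimately show ?thesis using that by blast
qed

lemma locally_by_compose:
  assumes f1: "locally_by d H f1" and f2: "f2 \<in> Bij (iwords d)" "locally_by d H f2"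
  shows "locally_by d H (compose (iwords d) f1 f2)"
  unfolding locally_by_def
proof
  fix w assume w: "w \<in> iwords d"
  have "f2 w \<in> iwords d" using f2(1) w Bij_imp_funcset by blast
  then obtain n1 u1 h1 where h1: "h1 \<in> H" "u1 \<in> fwords d"
    and e1: "\<forall>z\<in>iwords d. f1 (conc (ipref (f2 w) n1) z) = conc u1 (iact h1 z)"
    using f1 unfolding locally_by_def by blast
  obtain n2 u2 h2 where h2: "h2 \<in> H" "u2 \<in> fwords d" "n1 \<le> length u2"
    and e2: "\<forall>z\<in>iwords d. f2 (conc (ipref w n2) z) = conc u2 (iact h2 z)"
    by (rule locally_by_long_image[OF f2(2) w, where m = n1])
  have h1G: "h1 \<in> G" and h2G: "h2 \<in> G" using h1 h2 H_subset by auto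
  define r where "r = drop n1 u2"
  have r: "r \<in> fwords d" unfolding r_def using h2(2) by (rule fwords_drop)
  have "f2 w = conc u2 (iact h2 (ishift n2 w))"
    using e2 ishift_in_iwords[OF w] conc_ipref_ishift[of w n2] by metis
  then have "u2 = ipref (f2 w) n1 @ r"
    using h2(3) by (simp add: ipref_conc_le r_def)
  then have e1': "\<forall>z\<in>iwords d. f1 (conc u2 z) = conc (u1 @ h1 r) (iact (wsection d h1 r) z)"
    using cylinder_refine[OF h1G r e1] by simp
  define h where "h = wsection d h1 r \<otimes>\<^bsub>Sym_fwords\<^esub> h2"
  have "\<forall>z\<in>iwords d. compose (iwords d) f1 f2 (conc (ipref w n2) z) = conc (u1 @ h1 r) (iact h z)"
  proof
    fix z assume z: "z \<in> iwords d"
    have "compose (iwords d) f1 f2 (conc (ipref w n2) z) = f1 (conc u2 (iact h2 z))"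
      using conc_in_iwords[OF ipref_in_fwords[OF w] z] e2 z by (simp add: compose_def)
    also have "\<dots> = conc (u1 @ h1 r) (iact (wsection d h1 r) (iact h2 z))"
      using e1' iact_in_iwords[OF G_tree_aut[OF h2G] z] by blast
    also have "iact (wsection d h1 r) (iact h2 z) = iact h z"
      unfolding h_def using iact_mult[OF wsection_in_G[OF h1G r] h2G z] by simp
    finally show "compose (iwords d) f1 f2 (conc (ipref w n2) z) = conc (u1 @ h1 r) (iact h z)" .
  qed
  moreover have "h \<in> H" unfolding h_def using subgroup.m_closed[OF H_subgroup] H_wsection h1 r h2 by blast
  moreover have "u1 @ h1 r \<in> fwords d" using h1 tree_aut_in_fwords[OF G_tree_aut[OF h1G] r] by simp
  ultimately show "\<exists>n u h. h \<in> H \<and> u \<in> fwords d \<and>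
      (\<forall>z\<in>iwords d. compose (iwords d) f1 f2 (conc (ipref w n) z) = conc u (iact h z))"
    by blast
qed

lemma locally_by_inv:
  assumes f: "f \<in> Bij (iwords d)" "locally_by d H f"
  shows "locally_by d H (\<lambda>x\<in>iwords d. inv_into (iwords d) f x)"
  unfolding locally_by_def
proof
  fix w assume w: "w \<in> iwords d"
  have bij: "bij_betw f (iwords d) (iwords d)" using f(1) by (simp add: Bij_def)
  define w0 where "w0 = inv_into (iwords d) f w"
  have w0: "w0 \<in> iwords d" "f w0 = w"
    using bij w unfolding w0_def by (auto simp: bij_betw_def inv_into_into f_inv_into_f)
  obtain n u h where h: "h \<in> H" "u \<in> fwords d"
    and e: "\<forall>z\<in>iwords d. f (conc (ipref w0 n) z) = conc u (iact h z)"
    using f(2) w0(1) unfolding locally_by_def by blast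
  have hG: "h \<in> G" using h H_subset by blast
  have "w = conc u (iact h (ishift n w0))"
    using e ishift_in_iwords[OF w0(1)] conc_ipref_ishift[of w0 n] w0(2) by metis
  then have pw: "ipref w (length u) = u" by (simp add: ipref_conc_length)
  have "\<forall>z\<in>iwords d. (\<lambda>x\<in>iwords d. inv_into (iwords d) f x) (conc (ipref w (length u)) z)
      = conc (ipref w0 n) (iact (inv\<^bsub>Sym_fwords\<^esub> h) z)"
  proof
    fix z assume z: "z \<in> iwords d"
    define x where "x = conc (ipref w0 n) (iact (inv\<^bsub>Sym_fwords\<^esub> h) z)"
    have iz: "iact (inv\<^bsub>Sym_fwords\<^esub> h) z \<in> iwords d"
      using iact_in_iwords[OF G_tree_aut[OF G_inv[OF hG]] z] .
    have "x \<in> iwords d" unfolding x_def using conc_in_iwords[OF ipref_in_fwords[OF w0(1)] iz] .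
    moreover have "f x = conc u z" unfolding x_def using e iz iact_inv_right[OF hG z] by simp
    ultimately have "inv_into (iwords d) f (conc u z) = x"
      using bij by (metis bij_betw_def inv_into_f_f)
    then show "(\<lambda>x\<in>iwords d. inv_into (iwords d) f x) (conc (ipref w (length u)) z)
      = conc (ipref w0 n) (iact (inv\<^bsub>Sym_fwords\<^esub> h) z)"
      using pw conc_in_iwords[OF h(2) z] unfolding x_def by simp
  qed
  moreover have "inv\<^bsub>Sym_fwords\<^esub> h \<in> H" using subgroup.m_inv_closed[OF H_subgroup h(1)] .
  ultimately show "\<exists>n u h. h \<in> H \<and> u \<in> fwords d \<and>
      (\<forall>z\<in>iwords d. (\<lambda>x\<in>iwords d. inv_into (iwords d) f x) (conc (ipref w n) z) = conc u (iact h z))"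
    using ipref_in_fwords[OF w0(1)] by blast
qed

lemma locally_by_restrict_id: "locally_by d H (\<lambda>x\<in>iwords d. x)"
  unfolding locally_by_def
proof
  fix w assume "w \<in> iwords d"
  have "\<forall>z\<in>iwords d. (\<lambda>x\<in>iwords d. x) (conc (ipref w 0) z) = conc [] (iact \<one>\<^bsub>Sym_fwords\<^esub> z)"
    using iact_restrict_id by (simp add: one_Sym_fwords ipref_def)
  then show "\<exists>n u h. h \<in> H \<and> u \<in> fwords d \<and>
      (\<forall>z\<in>iwords d. (\<lambda>x\<in>iwords d. x) (conc (ipref w n) z) = conc u (iact h z))"
    using subgroup.one_closed[OF H_subgroup] fwords_Nil by blast
qed

lemma subgroup_local_bijections: "subgroup local_bijections (BijGroup (iwords d))"
proof (rule group.subgroupI[OF group_BijGroup])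
  show "local_bijections \<subseteq> carrier (BijGroup (iwords d))"
    unfolding local_bijections_def by (auto simp: BijGroup_def)
  show "local_bijections \<noteq> {}"
    unfolding local_bijections_def using locally_by_restrict_id id_Bij by blast
next
  fix f assume "f \<in> local_bijections"
  then have f: "f \<in> Bij (iwords d)" "locally_by d H f" unfolding local_bijections_def by auto
  show "inv\<^bsub>BijGroup (iwords d)\<^esub> f \<in> local_bijections"
    unfolding local_bijections_def inv_BijGroup[OF f(1)]
    using restrict_inv_into_Bij[OF f(1)] locally_by_inv[OF f] by blast
next
  fix f1 f2 assume "f1 \<in> local_bijections" "f2 \<in> local_bijections"
  then show "f1 \<otimes>\<^bsub>BijGroup (iwords d)\<^esub> f2 \<in> local_bijections"
    unfolding local_bijections_def using compose_Bij locally_by_compose by (auto simp: BijGroup_def)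
qed

lemma persistent_G_subset:
  assumes "persistent d G" and loc: "\<forall>g\<in>G. locally_by d H (\<lambda>w\<in>iwords d. iact g w)"
  shows "G \<subseteq> H"
proof
  fix g assume g: "g \<in> G"
  obtain x where x: "x < d" "section1 d g x = g"
    using assms(1) g unfolding persistent_def by blast
  define w where "w = (\<lambda>_::nat. x)"
  have w: "w \<in> iwords d" unfolding w_def iwords_def using x by simp
  obtain n u h where h: "h \<in> H" "u \<in> fwords d"
    and e: "\<forall>z\<in>iwords d. (\<lambda>w\<in>iwords d. iact g w) (conc (ipref w n) z) = conc u (iact h z)"
    using loc g w unfolding locally_by_def by blast
  have p: "ipref w n = replicate n x" "ipref w n \<in> fwords d"
    using ipref_in_fwords[OF w] unfolding w_def ipref_def by (auto simp: map_replicate_const)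
  have "\<forall>z\<in>iwords d. conc (g (ipref w n)) (iact g z) = conc u (iact h z)"
    using e iact_conc[OF G_tree_aut[OF g] p(2)] conc_in_iwords[OF p(2)]
      wsection_replicate[OF G_extensional[OF g] x] p(1) by simp
  then have "g = h"
    using cylinder_action_unique[OF g _ tree_aut_in_fwords[OF G_tree_aut[OF g] p(2)] h(2)] h(1) H_subset
    by blast
  then show "g \<in> H" using h by simp
qed

end

lemma (in self_similar_group) state_closed_subgroup_generate:
  assumes "F \<subseteq> G" "\<forall>t\<in>F. \<forall>i<d. section1 d t i \<in> F"
  shows "state_closed_subgroup d G (generate Sym_fwords F)"
proof (intro state_closed_subgroup.intro[OF self_similar_group_axioms] state_closed_subgroup_axioms.intro)
  show "generate Sym_fwords F \<subseteq> G" using generate_subset_G[OF assms(1)] .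
  show "subgroup (generate Sym_fwords F) Sym_fwords"
    using group.generate_is_subgroup[OF group_Sym_fwords] G_carrier assms(1) by blast
  show "\<forall>h\<in>generate Sym_fwords F. \<forall>u\<in>fwords d. wsection d h u \<in> generate Sym_fwords F"
    using wsection_generate[OF assms] by blast
qed

lemma leaves_subset_fwords: "complete_subtree d T \<Longrightarrow> leaves d T \<subseteq> fwords d"
  unfolding complete_subtree_def leaves_def by blast

lemma leaf_list_spec:
  assumes "complete_subtree d T"
  shows "set (leaf_list d T) = leaves d T \<and> sorted_wrt (<) (leaf_list d T)"
proof -
  have "finite (leaves d T)" using assms unfolding complete_subtree_def leaves_def by auto
  then have ex1: "\<exists>!L. set L = leaves d T \<and> sorted_wrt (<) L"
    using ex1_sorted_list_for_set_if_finite by (simp add: conj_commute)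
  have "lexless = (<)" by (auto simp: fun_eq_iff lexless_def list_less_def)
  then show ?thesis unfolding leaf_list_def using theI'[OF ex1] by simp
qed

lemma set_leaf_list: "complete_subtree d T \<Longrightarrow> set (leaf_list d T) = leaves d T"
  using leaf_list_spec by blast

lemma distinct_leaf_list: "complete_subtree d T \<Longrightarrow> distinct (leaf_list d T)"
  using leaf_list_spec strict_sorted_iff by blast

lemma exists_leaf_prefix:
  assumes T: "complete_subtree d T" and w: "w \<in> iwords d"
  shows "\<exists>u\<in>leaves d T. ipref w (length u) = u"
proof -
  define N where "N = {n. ipref w n \<in> T}"
  have fin: "finite N"
  proof (rule finite_subset)
    show "N \<subseteq> length ` T" unfolding N_def by (auto intro: image_eqI[where x = "ipref w _"])
    show "finite (length ` T)" using T by (simp add: complete_subtree_def)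
  qed
  have "0 \<in> N" using T by (simp add: N_def ipref_def complete_subtree_def)
  define n where "n = Max N"
  have inT: "ipref w n \<in> T" using Max_in[OF fin] \<open>0 \<in> N\<close> unfolding n_def by (auto simp: N_def)
  have "Suc n \<notin> N"
  proof
    assume "Suc n \<in> N"
    from Max_ge[OF fin this] show False unfolding n_def by simp
  qed
  then have "ipref w n @ [w n] \<notin> T" by (simp add: N_def ipref_Suc)
  moreover have "w n < d" using w by (simp add: iwords_def)
  moreover have "(\<forall>i<d. ipref w n @ [i] \<in> T) \<or> (\<forall>i<d. ipref w n @ [i] \<notin> T)"
    using T inT by (simp add: complete_subtree_def)
  ultimately have "ipref w n \<in> leaves d T" using inT by (auto simp: leaves_def)
  then show ?thesis by force
qed

text \<open>A longer leaf prefix would pass through the child of a shorter one, which is not in \<open>T\<close>.\<close>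

lemma leaf_prefix_unique:
  assumes T: "complete_subtree d T" and w: "w \<in> iwords d"
    and u: "u \<in> leaves d T" "ipref w (length u) = u"
    and u': "u' \<in> leaves d T" "ipref w (length u') = u'"
  shows "u = u'"
proof -
  have not_shorter: False
    if "u \<in> leaves d T" "ipref w (length u) = u" "u' \<in> leaves d T" "ipref w (length u') = u'"
       "length u < length u'" for u u'
  proof -
    have "length u' = Suc (length u) + (length u' - Suc (length u))" using that(5) by simp
    then have "u' = ipref w (Suc (length u)) @ ipref (ishift (Suc (length u)) w) (length u' - Suc (length u))"
      using that(4) ipref_add by metis
    then have "(u @ [w (length u)]) @ ipref (ishift (Suc (length u)) w) (length u' - Suc (length u)) = u'"
      using that(2) ipref_Suc by metis
    moreover have "u' \<in> T" using that(3) by (simp add: leaves_def)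
    moreover have "\<forall>a b. a @ b \<in> T \<longrightarrow> a \<in> T" using T by (simp add: complete_subtree_def)
    ultimately have "u @ [w (length u)] \<in> T" by metis
    moreover have "w (length u) < d" using w by (simp add: iwords_def)
    ultimately show False using that(1) unfolding leaves_def by blast
  qed
  consider "length u < length u'" | "length u' < length u" | "length u = length u'" by linarith
  then show ?thesis using not_shorter[OF u u'] not_shorter[OF u' u] u(2) u'(2) by cases metis+
qed

lemma leaf_list_cover:
  "complete_subtree d T \<Longrightarrow> w \<in> iwords d \<Longrightarrow>
    \<exists>i<length (leaf_list d T). ipref w (length (leaf_list d T ! i)) = leaf_list d T ! i"
  using exists_leaf_prefix set_leaf_list by (metis in_set_conv_nth)

section \<open>Elements of \<open>V\<^sub>d(G)\<close>\<close>

locale V_presentation = self_similar_group +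
  fixes Tm Tp :: "nat list set" and \<sigma> :: "nat \<Rightarrow> nat"
    and gs :: "nat \<Rightarrow> nat list \<Rightarrow> nat list" and f :: "(nat \<Rightarrow> nat) \<Rightarrow> nat \<Rightarrow> nat"
  assumes Tm: "complete_subtree d Tm" and Tp: "complete_subtree d Tp"
    and same_length: "length (leaf_list d Tm) = length (leaf_list d Tp)"
    and \<sigma>_bij: "bij_betw \<sigma> {..<length (leaf_list d Tp)} {..<length (leaf_list d Tp)}"
    and gs_in_G_all: "\<forall>i<length (leaf_list d Tp). gs i \<in> G"
    and f_extensional: "f \<in> extensional (iwords d)"
    and f_on_leaves: "\<forall>i<length (leaf_list d Tp). \<forall>w\<in>iwords d.
          f (conc (leaf_list d Tp ! i) w) = conc (leaf_list d Tm ! \<sigma> i) (iact (gs i) w)"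
begin

abbreviation "Lm \<equiv> leaf_list d Tm"
abbreviation "Lp \<equiv> leaf_list d Tp"
abbreviation "N \<equiv> length Lp"

lemma gs_in_G: "i < N \<Longrightarrow> gs i \<in> G"
  using gs_in_G_all by blast

lemma \<sigma>_less: "i < N \<Longrightarrow> \<sigma> i < N"
  using \<sigma>_bij unfolding bij_betw_def by auto

lemma f_cylinder: "i < N \<Longrightarrow> z \<in> iwords d \<Longrightarrow> f (conc (Lp ! i) z) = conc (Lm ! \<sigma> i) (iact (gs i) z)"
  using f_on_leaves by blast

lemma Lm_leaves: "j < N \<Longrightarrow> Lm ! j \<in> leaves d Tm"
  using set_leaf_list[OF Tm] same_length by (metis nth_mem)

lemma Lm_fwords: "j < N \<Longrightarrow> Lm ! j \<in> fwords d"
  using Lm_leaves leaves_subset_fwords[OF Tm] by blast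

lemma Lp_fwords: "i < N \<Longrightarrow> Lp ! i \<in> fwords d"
  using set_leaf_list[OF Tp] leaves_subset_fwords[OF Tp] by (metis nth_mem subsetD)

lemma Lp_cover: "w \<in> iwords d \<Longrightarrow> \<exists>i<N. w = conc (Lp ! i) (ishift (length (Lp ! i)) w)"
  using leaf_list_cover[OF Tp] conc_ipref_ishift by metis

lemma f_in_iwords: "w \<in> iwords d \<Longrightarrow> f w \<in> iwords d"
  using Lp_cover f_cylinder ishift_in_iwords conc_in_iwords Lm_fwords \<sigma>_less
    iact_in_iwords G_tree_aut gs_in_G by metis

lemma inj_on_f: "inj_on f (iwords d)"
proof (rule inj_onI)
  fix w1 w2 assume w1: "w1 \<in> iwords d" and w2: "w2 \<in> iwords d" and eq: "f w1 = f w2"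
  obtain i where i: "i < N" "w1 = conc (Lp ! i) (ishift (length (Lp ! i)) w1)" using Lp_cover[OF w1] by blast
  obtain j where j: "j < N" "w2 = conc (Lp ! j) (ishift (length (Lp ! j)) w2)" using Lp_cover[OF w2] by blast
  define z1 where "z1 = ishift (length (Lp ! i)) w1"
  define z2 where "z2 = ishift (length (Lp ! j)) w2"
  have z: "z1 \<in> iwords d" "z2 \<in> iwords d" unfolding z1_def z2_def using ishift_in_iwords w1 w2 by auto
  have f1: "f w1 = conc (Lm ! \<sigma> i) (iact (gs i) z1)" using f_cylinder[OF i(1) z(1)] i(2) z1_def by simp
  have f2: "f w2 = conc (Lm ! \<sigma> j) (iact (gs j) z2)" using f_cylinder[OF j(1) z(2)] j(2) z2_def by simp
  have "Lm ! \<sigma> i = Lm ! \<sigma> j"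
    using leaf_prefix_unique[OF Tm f_in_iwords[OF w1] Lm_leaves[OF \<sigma>_less[OF i(1)]] _
        Lm_leaves[OF \<sigma>_less[OF j(1)]]] f1 f2 eq ipref_conc_length by metis
  then have "\<sigma> i = \<sigma> j"
    using distinct_leaf_list[OF Tm] \<sigma>_less i(1) j(1) same_length by (simp add: nth_eq_iff_index_eq)
  then have ij: "i = j" using \<sigma>_bij i(1) j(1) unfolding bij_betw_def inj_on_def by blast
  then have "iact (gs i) z1 = iact (gs i) z2" using f1 f2 eq conc_inj by metis
  then have "z1 = z2" using iact_inv_left[OF gs_in_G[OF i(1)]] z by metis
  then show "w1 = w2" using i(2) j(2) ij unfolding z1_def z2_def by metis
qed

lemma iwords_subset_image_f: "iwords d \<subseteq> f ` iwords d"
proof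
  fix y assume y: "y \<in> iwords d"
  obtain j where j: "j < N" "ipref y (length (Lm ! j)) = Lm ! j"
    using leaf_list_cover[OF Tm y] same_length by metis
  obtain i where i: "i < N" "\<sigma> i = j"
    using \<sigma>_bij j(1) unfolding bij_betw_def by (metis imageE lessThan_iff)
  define y' where "y' = ishift (length (Lm ! j)) y"
  have y': "y' \<in> iwords d" unfolding y'_def using ishift_in_iwords[OF y] .
  define x where "x = conc (Lp ! i) (iact (inv\<^bsub>Sym_fwords\<^esub> (gs i)) y')"
  have iy: "iact (inv\<^bsub>Sym_fwords\<^esub> (gs i)) y' \<in> iwords d"
    using iact_in_iwords[OF G_tree_aut[OF G_inv[OF gs_in_G[OF i(1)]]] y'] .
  have "f x = conc (Lm ! j) (iact (gs i) (iact (inv\<^bsub>Sym_fwords\<^esub> (gs i)) y'))"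
    unfolding x_def using f_cylinder[OF i(1) iy] i(2) by simp
  also have "\<dots> = y"
    using iact_inv_right[OF gs_in_G[OF i(1)] y'] conc_ipref_ishift[of y "length (Lm ! j)"] j(2)
    by (simp add: y'_def)
  finally show "y \<in> f ` iwords d" using conc_in_iwords[OF Lp_fwords[OF i(1)] iy] x_def by blast
qed

lemma f_in_Bij: "f \<in> Bij (iwords d)"
  using inj_on_f f_in_iwords iwords_subset_image_f f_extensional
  by (auto simp: Bij_def bij_betw_def)

lemma locally_by_states: "locally_by d (\<Union>i<N. states d (gs i)) f"
  unfolding locally_by_def
proof
  fix w assume "w \<in> iwords d"
  then obtain i where i: "i < N" "ipref w (length (Lp ! i)) = Lp ! i"
    using leaf_list_cover[OF Tp] by blast
  then have "\<forall>z\<in>iwords d. f (conc (ipref w (length (Lp ! i))) z) = conc (Lm ! \<sigma> i) (iact (gs i) z)"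
    using f_cylinder by simp
  moreover have "gs i \<in> (\<Union>i<N. states d (gs i))" using i states.self by blast
  ultimately show "\<exists>n u h. h \<in> (\<Union>i<N. states d (gs i)) \<and> u \<in> fwords d \<and>
      (\<forall>z\<in>iwords d. f (conc (ipref w n) z) = conc u (iact h z))"
    using Lm_fwords[OF \<sigma>_less[OF i(1)]] by blast
qed

end

context self_similar_group
begin

lemma Vgroup_presentation:
  "f \<in> Vgroup d G \<Longrightarrow> \<exists>Tm Tp \<sigma> gs. V_presentation d G Tm Tp \<sigma> gs f"
  unfolding Vgroup_def is_V_elem_def
  using V_presentation.intro[OF self_similar_group_axioms] V_presentation_axioms.intro by blast

lemma Vgroup_subset_Bij: "Vgroup d G \<subseteq> Bij (iwords d)"
  using Vgroup_presentation V_presentation.f_in_Bij by blast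

lemma Vgroup_locally_by_finite_states:
  assumes "finite_state d G" and "f \<in> Vgroup d G"
  obtains F where "finite F" "F \<subseteq> G" "\<forall>t\<in>F. \<forall>i<d. section1 d t i \<in> F" "locally_by d F f"
proof -
  obtain Tm Tp \<sigma> gs where "V_presentation d G Tm Tp \<sigma> gs f"
    using Vgroup_presentation assms(2) by blast
  then interpret V_presentation d G Tm Tp \<sigma> gs f .
  show ?thesis
  proof (rule that)
    show "finite (\<Union>i<N. states d (gs i))"
      using assms(1) gs_in_G by (auto simp: finite_state_def)
    show "(\<Union>i<N. states d (gs i)) \<subseteq> G"
      using G_self_similar gs_in_G by (auto simp: self_similar_def)
    show "\<forall>t\<in>(\<Union>i<N. states d (gs i)). \<forall>j<d. section1 d t j \<in> (\<Union>i<N. states d (gs i))"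
      using states.step by blast
    show "locally_by d (\<Union>i<N. states d (gs i)) f"
      by (rule locally_by_states)
  qed
qed

lemma restrict_iact_in_Vgroup: "g \<in> G \<Longrightarrow> (\<lambda>w\<in>iwords d. iact g w) \<in> Vgroup d G"
proof -
  assume g: "g \<in> G"
  have T: "complete_subtree d {[]}" unfolding complete_subtree_def by simp
  have L: "set (leaf_list d {[]}) = {[]}" "distinct (leaf_list d {[]})"
    using set_leaf_list[OF T] distinct_leaf_list[OF T] by (auto simp: leaves_def)
  then have "length (leaf_list d {[]}) = 1" using distinct_card by fastforce
  then have "leaf_list d {[]} = [[]]" using L(1) by (cases "leaf_list d {[]}") auto
  then show ?thesis
    unfolding Vgroup_def is_V_elem_def mem_Collect_eq
    using T g by (intro exI[of _ "{[]}"] exI[of _ id] exI[of _ "\<lambda>_. g"]) simp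
qed

lemma finite_subset_Vgroup_locally_by:
  assumes "finite_state d G" and S: "finite S" "S \<subseteq> Vgroup d G"
  obtains F where "finite F" "F \<subseteq> G" "\<forall>t\<in>F. \<forall>i<d. section1 d t i \<in> F"
    "\<forall>s\<in>S. locally_by d F s"
proof -
  have ex_F: "\<forall>s\<in>S. \<exists>F. finite F \<and> F \<subseteq> G \<and> (\<forall>t\<in>F. \<forall>i<d. section1 d t i \<in> F) \<and> locally_by d F s"
  proof
    fix s assume "s \<in> S"
    obtain F where "finite F" "F \<subseteq> G" "\<forall>t\<in>F. \<forall>i<d. section1 d t i \<in> F" "locally_by d F s"
      by (rule Vgroup_locally_by_finite_states[OF assms(1) subsetD[OF S(2) \<open>s \<in> S\<close>]])
    then show "\<exists>F. finite F \<and> F \<subseteq> G \<and> (\<forall>t\<in>F. \<forall>i<d. section1 d t i \<in> F) \<and> locally_by d F s"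
      by blast
  qed
  obtain Fs where Fs: "\<forall>s\<in>S. finite (Fs s) \<and> Fs s \<subseteq> G \<and>
      (\<forall>t\<in>Fs s. \<forall>i<d. section1 d t i \<in> Fs s) \<and> locally_by d (Fs s) s"
    using bchoice[OF ex_F] by blast
  have Fs_fin: "finite (Fs s)" and Fs_G: "Fs s \<subseteq> G"
    and Fs_closed: "\<forall>t\<in>Fs s. \<forall>i<d. section1 d t i \<in> Fs s" and Fs_loc: "locally_by d (Fs s) s"
    if "s \<in> S" for s
    using bspec[OF Fs that] by blast+
  have "finite (\<Union>(Fs ` S))" "\<Union>(Fs ` S) \<subseteq> G"
    "\<forall>t\<in>\<Union>(Fs ` S). \<forall>i<d. section1 d t i \<in> \<Union>(Fs ` S)"
    using Fs_G Fs_closed by (blast intro: finite_UN_I S(1) Fs_fin)+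
  moreover have "\<forall>s\<in>S. locally_by d (\<Union>(Fs ` S)) s"
  proof
    fix s assume "s \<in> S"
    then have "Fs s \<subseteq> \<Union>(Fs ` S)" by blast
    then show "locally_by d (\<Union>(Fs ` S)) s" using Fs_loc[OF \<open>s \<in> S\<close>] by (rule locally_by_mono)
  qed
  ultimately show ?thesis by (rule that)
qed

lemma fin_gen_Vgroup_locally_by_generate:
  assumes "finite_state d G" and "fin_gen (iwords d) (Vgroup d G)"
  obtains F where "finite F" "F \<subseteq> G" "\<forall>t\<in>F. \<forall>i<d. section1 d t i \<in> F"
    "\<forall>f\<in>Vgroup d G. locally_by d (generate Sym_fwords F) f"
proof -
  obtain S where S: "finite S" "S \<subseteq> Vgroup d G" "generate (BijGroup (iwords d)) S = Vgroup d G"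
    using assms(2) unfolding fin_gen_def by (elim exE conjE)
  obtain F where F: "finite F" "F \<subseteq> G" "\<forall>t\<in>F. \<forall>i<d. section1 d t i \<in> F"
    and loc: "\<forall>s\<in>S. locally_by d F s"
    by (rule finite_subset_Vgroup_locally_by[OF assms(1) S(1,2)])
  interpret K: state_closed_subgroup d G "generate Sym_fwords F"
    using state_closed_subgroup_generate[OF F(2,3)] .
  have "S \<subseteq> K.local_bijections"
  proof
    fix s assume s: "s \<in> S"
    have "F \<subseteq> generate Sym_fwords F" using generate.incl by (metis subset_iff)
    then have "locally_by d (generate Sym_fwords F) s" using bspec[OF loc s] by (rule locally_by_mono)
    moreover have "s \<in> Bij (iwords d)" using Vgroup_subset_Bij S(2) s by (metis subsetD)
    ultimately show "s \<in> K.local_bijections" unfolding K.local_bijections_def by simp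
  qed
  then have "generate (BijGroup (iwords d)) S \<subseteq> K.local_bijections"
    by (rule group.generate_subgroup_incl[OF group_BijGroup _ K.subgroup_local_bijections])
  then have "\<forall>f\<in>Vgroup d G. locally_by d (generate Sym_fwords F) f"
    unfolding S(3) K.local_bijections_def by blast
  with F show ?thesis by (rule that)
qed

end

theorem lemma5p7:
  fixes d :: nat and G :: "(nat list \<Rightarrow> nat list) set"
  assumes "d \<ge> 2"
    and "subgroup G (BijGroup (fwords d))"
    and "\<forall>g\<in>G. tree_aut d g"
    and "persistent d G" and "finite_state d G" and "self_similar d G"
    and "fin_gen (iwords d) (Vgroup d G)"
  shows "fin_gen (fwords d) G"
proof -
  interpret self_similar_group d G
    using assms by (intro self_similar_group.intro) auto
  obtain F where F: "finite F" "F \<subseteq> G" "\<forall>t\<in>F. \<forall>i<d. section1 d t i \<in> F"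
    and V: "\<forall>f\<in>Vgroup d G. locally_by d (generate Sym_fwords F) f"
    using fin_gen_Vgroup_locally_by_generate assms(5,7) by blast
  interpret K: state_closed_subgroup d G "generate Sym_fwords F"
    using state_closed_subgroup_generate[OF F(2,3)] .
  have "G \<subseteq> generate Sym_fwords F"
    using K.persistent_G_subset assms(4) V restrict_iact_in_Vgroup by blast
  then have "generate Sym_fwords F = G" using generate_subset_G[OF F(2)] by blast
  then show ?thesis unfolding fin_gen_def using F(1,2) by blast
qed

end
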